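(* For integers $\lambda_1\ge\lambda_2\ge0$: $F_{(\lambda_1)}(q)=[2]^{\lambda_1}$ and $F_{(\lambda_1,\lambda_2)}(q)=-q^{-1}[2]^{\lambda_1}+q^{-1}[2]^{\lambda_1-\lambda_2+1}[3]^{\lambda_2}$.
   Context: $[m]=1+q+\dots+q^{m-1}$. For a partition $\lambda=(\lambda_1\ge\dots\ge\lambda_k\ge0)$, the Young diagram $Y_\lambda$ has $\lambda_i$ left-justified boxes in row $i$ (row 1 on top). A $\hbox{Le}$-filling of $Y_\lambda$ is a map $D:Y_\lambda\to\{0,1\}$ such that no box filled with $0$ has a box filled with $1$ somewhere above it in the same column and a box filled with $1$ somewhere to its left in the same row. $F_\lambda(q)=\sum_D q^{\#\{\text{boxes with }D=1\}}$ over all $\hbox{Le}$-fillings of $Y_\lambda$. *)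

theory Defs
  imports Main
begin

definition qint :: "nat \<Rightarrow> 'a::comm_ring_1 \<Rightarrow> 'a" where
  "qint m q = (\<Sum>i<m. q ^ i)"

text \<open>Young diagram of a partition given as a list [lambda_1, ..., lambda_k]
  (weakly decreasing); boxes are (row, column), 0-indexed, row 0 on top.\<close>
definition young :: "nat list \<Rightarrow> (nat \<times> nat) set" where
  "young lam = {(i, j). i < length lam \<and> j < lam ! i}"

text \<open>A filling D : Y -> {0,1} is represented by the set S of boxes filled with 1.
  Le-condition: no box filled with 0 has a 1 above it in its column and a 1
  to its left in its row.\<close>
definition le_filling :: "nat list \<Rightarrow> (nat \<times> nat) set \<Rightarrow> bool" where
  "le_filling lam S \<longleftrightarrow> S \<subseteq> young lam \<and>
     (\<forall>i j. (i, j) \<in> young lam \<and> (i, j) \<notin> S \<longrightarrow>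
        \<not> ((\<exists>i'<i. (i', j) \<in> S) \<and> (\<exists>j'<j. (i, j') \<in> S)))"

definition F :: "nat list \<Rightarrow> 'a::comm_ring_1 \<Rightarrow> 'a" where
  "F lam q = (\<Sum>S\<in>{S. le_filling lam S}. q ^ card S)"

end

theory Submission
  imports Defs
begin

text \<open>
  For one row the Le-condition is vacuous, so \<open>F\<close> is the generating function of all
  subsets of a \<open>\<lambda>\<^sub>1\<close>-set. For two rows the condition says: a 0 in the second row
  below a 1 forces the second row to be empty to its left. The first-row cells beyond
  column \<open>\<lambda>\<^sub>2\<close> are therefore free, which reduces to the square shape \<open>(n, n)\<close>;
  there, classifying fillings by their last column gives \<open>F\<^sub>n\<^sub>+\<^sub>1 = [3] F\<^sub>n + q [2]\<^sup>n\<close>,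
  solved by \<open>q F\<^sub>n = [2] [3]\<^sup>n - [2]\<^sup>n\<close>.
\<close>

definition fillings :: "nat list \<Rightarrow> (nat \<times> nat) set set" where
  "fillings lam = {S. le_filling lam S}"

definition weight :: "'a::comm_ring_1 \<Rightarrow> (nat \<times> nat) set set \<Rightarrow> 'a" where
  "weight q X = (\<Sum>S\<in>X. q ^ card S)"

lemma F_eq_weight_fillings: "F lam q = weight q (fillings lam)"
  by (simp add: F_def weight_def fillings_def)

lemma weight_union:
  "finite X \<Longrightarrow> finite Y \<Longrightarrow> X \<inter> Y = {} \<Longrightarrow> weight q (X \<union> Y) = weight q X + weight q Y"
  unfolding weight_def by (rule sum.union_disjoint)

lemma weight_insert_image:
  assumes "\<And>S. S \<in> X \<Longrightarrow> finite S \<and> x \<notin> S"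
  shows "weight q (insert x ` X) = q * weight q X"
proof -
  have "inj_on (insert x) X"
    using assms by (auto simp: inj_on_def insert_ident)
  then have "weight q (insert x ` X) = (\<Sum>S\<in>X. q ^ card (insert x S))"
    by (simp add: weight_def sum.reindex)
  also have "\<dots> = (\<Sum>S\<in>X. q * q ^ card S)"
    using assms by (intro sum.cong) auto
  finally show ?thesis by (simp add: weight_def sum_distrib_left)
qed

lemma weight_Un_insert_image:
  assumes "finite X" and "\<And>S. S \<in> X \<Longrightarrow> finite S \<and> x \<notin> S"
  shows "weight q (X \<union> insert x ` X) = (1 + q) * weight q X"
proof -
  have "X \<inter> insert x ` X = {}" using assms(2) by auto
  then show ?thesis
    using assms by (simp add: weight_union weight_insert_image algebra_simps)
qed

lemma weight_Pow: "finite A \<Longrightarrow> weight q (Pow A) = (1 + q) ^ card A"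
  using prod_add[of A "\<lambda>_. q" "\<lambda>_. 1"] by (simp add: weight_def add.commute)

lemma young_eq_Sigma: "young lam = (SIGMA i:{..<length lam}. {..<lam ! i})"
  by (auto simp: young_def)

lemma finite_young: "finite (young lam)"
  by (simp add: young_eq_Sigma)

lemma finite_fillings: "finite (fillings lam)"
  by (rule finite_subset[of _ "Pow (young lam)"])
     (auto simp: fillings_def le_filling_def finite_young)

lemma subset_young_if_mem_fillings: "S \<in> fillings lam \<Longrightarrow> S \<subseteq> young lam"
  by (simp add: fillings_def le_filling_def)

lemma finite_of_mem_fillings: "S \<in> fillings lam \<Longrightarrow> finite S"
  by (auto simp: fillings_def le_filling_def intro: finite_subset[OF _ finite_young])

lemma le_filling_single_row_iff: "le_filling [a] S \<longleftrightarrow> S \<subseteq> young [a]"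
  by (auto simp: le_filling_def young_def)

lemma fillings_single_row: "fillings [a] = Pow (young [a])"
  by (auto simp: fillings_def le_filling_single_row_iff)

lemma young_single_row: "young [a] = Pair 0 ` {..<a}"
  by (auto simp: young_def)

lemma card_young_single_row: "card (young [a]) = a"
  by (simp add: young_single_row card_image inj_on_def)

lemma F_single_row: "F [a] q = (1 + q) ^ a"
  by (simp add: F_eq_weight_fillings fillings_single_row weight_Pow finite_young card_young_single_row)

lemma young_two_rows: "young [a, b] = {(i, j). i = 0 \<and> j < a \<or> i = 1 \<and> j < b}"
  by (auto simp: young_def less_Suc_eq nth_Cons split: nat.splits)

lemma young_two_rows_mono: "a' \<le> a \<Longrightarrow> b' \<le> b \<Longrightarrow> young [a', b'] \<subseteq> young [a, b]"
  by (auto simp: young_two_rows)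

lemma le_filling_two_rows_iff:
  "le_filling [a, b] S \<longleftrightarrow> S \<subseteq> young [a, b] \<and>
     (\<forall>j<b. (0, j) \<in> S \<and> (1, j) \<notin> S \<longrightarrow> (\<forall>j'<j. (1, j') \<notin> S))"
  unfolding le_filling_def young_two_rows
  by (auto simp: less_Suc_eq)

lemma le_filling_restrict:
  assumes "le_filling lam S" and "young mu \<subseteq> young lam"
  shows "le_filling mu (S \<inter> young mu)"
  using assms unfolding le_filling_def by blast

lemma fillings_restrict:
  "S \<in> fillings lam \<Longrightarrow> young mu \<subseteq> young lam \<Longrightarrow> S \<inter> young mu \<in> fillings mu"
  by (simp add: fillings_def le_filling_restrict)

lemma mem_Un_insert_image_if_Diff_mem:
  assumes "S - {x} \<in> X"
  shows "S \<in> X \<union> insert x ` X"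
proof (cases "x \<in> S")
  case True
  then have "S = insert x (S - {x})" by blast
  then show ?thesis using assms by blast
qed (use assms in simp)

lemma fillings_two_rows_Suc_first:
  assumes "b \<le> a"
  shows "fillings [Suc a, b] = fillings [a, b] \<union> insert (0, a) ` fillings [a, b]"
proof (intro equalityI subsetI)
  fix S assume "S \<in> fillings [Suc a, b]"
  then have "S - {(0, a)} \<in> fillings [a, b]"
    using assms by (auto simp: fillings_def le_filling_two_rows_iff young_two_rows less_Suc_eq)
  then show "S \<in> fillings [a, b] \<union> insert (0, a) ` fillings [a, b]"
    by (rule mem_Un_insert_image_if_Diff_mem)
qed (use assms in \<open>auto simp: fillings_def le_filling_two_rows_iff young_two_rows\<close>)

text \<open>Here \<open>fillings [n]\<close> plays the role of the fillings of \<open>[n, n]\<close> with empty second row.\<close>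

lemma fillings_square_Suc:
  "fillings [Suc n, Suc n] =
     (fillings [n, n] \<union> insert (1, n) ` fillings [n, n]) \<union>
     insert (0, n) ` (fillings [n] \<union> insert (1, n) ` fillings [n, n])"
  (is "_ = ?Y \<union> insert (0, n) ` ?Z")
proof (intro equalityI subsetI)
  fix S assume S: "S \<in> fillings [Suc n, Suc n]"
  define T where "T = S - {(0, n), (1, n)}"
  have "S \<subseteq> young [Suc n, Suc n]" using S by (simp add: fillings_def le_filling_def)
  then have "T = S \<inter> young [n, n]" by (auto simp: T_def young_two_rows less_Suc_eq)
  then have T: "T \<in> fillings [n, n]"
    using fillings_restrict[OF S young_two_rows_mono] by simp
  show "S \<in> ?Y \<union> insert (0, n) ` ?Z"
  proof (cases "(0, n) \<in> S")
    case False
    then have "S - {(1, n)} = T" by (auto simp: T_def)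
    then have "S \<in> ?Y"
      using T by (intro mem_Un_insert_image_if_Diff_mem) simp
    then show ?thesis by blast
  next
    case True
    have "S - {(0, n)} \<in> ?Z"
    proof (cases "(1, n) \<in> S")
      case True
      then have "S - {(0, n)} = insert (1, n) T" by (auto simp: T_def)
      then show ?thesis using T by simp
    next
      case False
      then have "\<forall>j<n. (1, j) \<notin> S"
        using S \<open>(0, n) \<in> S\<close> by (auto simp: fillings_def le_filling_two_rows_iff)
      then have "S - {(0, n)} \<in> fillings [n]"
        using \<open>S \<subseteq> young [Suc n, Suc n]\<close> \<open>(1, n) \<notin> S\<close>
        by (auto simp: fillings_single_row young_single_row young_two_rows less_Suc_eq)
      then show ?thesis by blast
    qed
    moreover have "S = insert (0, n) (S - {(0, n)})" using True by blast
    ultimately show ?thesis by blast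
  qed
next
  fix S assume "S \<in> ?Y \<union> insert (0, n) ` ?Z"
  then show "S \<in> fillings [Suc n, Suc n]"
    by (auto simp: fillings_def le_filling_two_rows_iff le_filling_single_row_iff
        young_two_rows young_single_row less_Suc_eq)
qed

lemma F_two_rows_Suc_first:
  assumes "b \<le> a"
  shows "F [Suc a, b] q = (1 + q) * F [a, b] q"
proof -
  have "(0, a) \<notin> S" if "S \<in> fillings [a, b]" for S
    using subset_young_if_mem_fillings[OF that] by (auto simp: young_two_rows)
  then show ?thesis
    unfolding F_eq_weight_fillings fillings_two_rows_Suc_first[OF assms]
    by (simp add: weight_Un_insert_image finite_fillings finite_of_mem_fillings)
qed

lemma F_two_rows_eq_square: "F [b + d, b] q = (1 + q) ^ d * F [b, b] q"
  by (induction d) (simp_all add: F_two_rows_Suc_first)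

lemma F_square_Suc: "F [Suc n, Suc n] q = (1 + q + q\<^sup>2) * F [n, n] q + q * (1 + q) ^ n"
proof -
  let ?X = "fillings [n, n]" and ?P = "fillings [n]"
  let ?Y = "?X \<union> insert (1, n) ` ?X" and ?Z = "?P \<union> insert (1, n) ` ?X"
  have new_cells: "finite S \<and> (0, n) \<notin> S \<and> (1, n) \<notin> S" if "S \<in> ?X \<or> S \<in> ?P" for S
  proof -
    have "S \<subseteq> young [n, n]"
      using that by (auto dest!: subset_young_if_mem_fillings simp: young_two_rows young_single_row)
    then show ?thesis
      using that finite_of_mem_fillings by (auto simp: young_two_rows)
  qed
  have "weight q ?Y = (1 + q) * weight q ?X"
    using new_cells by (simp add: weight_Un_insert_image finite_fillings)
  moreover have "weight q ?Z = (1 + q) ^ n + q * weight q ?X"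
  proof -
    have "?P \<inter> insert (1, n) ` ?X = {}" using new_cells by auto
    then show ?thesis
      using new_cells by (simp add: weight_union weight_insert_image finite_fillings
          F_single_row flip: F_eq_weight_fillings)
  qed
  moreover have "weight q (insert (0, n) ` ?Z) = q * weight q ?Z"
    using new_cells by (intro weight_insert_image) auto
  moreover have "?Y \<inter> insert (0, n) ` ?Z = {}" using new_cells by auto
  ultimately show ?thesis
    unfolding F_eq_weight_fillings fillings_square_Suc
    by (simp add: weight_union finite_fillings algebra_simps power2_eq_square)
qed

lemma F_square_closed_form: "q * F [n, n] q = (1 + q) * (1 + q + q\<^sup>2) ^ n - (1 + q) ^ n"
proof (induction n)
  case 0
  have "fillings [0, 0] = {{}}"
    by (auto simp: fillings_def le_filling_def young_two_rows)
  then show ?case by (simp add: F_eq_weight_fillings weight_def)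
next
  case (Suc n)
  have "q * F [Suc n, Suc n] q = (1 + q + q\<^sup>2) * (q * F [n, n] q) + q\<^sup>2 * (1 + q) ^ n"
    by (simp add: F_square_Suc algebra_simps power2_eq_square)
  also have "\<dots> = (1 + q) * (1 + q + q\<^sup>2) ^ Suc n - (1 + q) ^ Suc n"
    unfolding Suc.IH by (simp add: algebra_simps power2_eq_square)
  finally show ?case .
qed

lemma qint_2: "qint 2 q = 1 + q"
  by (simp add: qint_def numeral_2_eq_2)

lemma qint_3: "qint 3 q = 1 + q + q\<^sup>2"
  by (simp add: qint_def numeral_3_eq_3 power2_eq_square)

theorem mainTheorem3:
  fixes l1 l2 :: nat and q :: "'a::field"
  assumes "l1 \<ge> l2" and "q \<noteq> 0"
  shows "F [l1] q = (qint 2 q) ^ l1 \<and>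
         F [l1, l2] q = - inverse q * (qint 2 q) ^ l1
            + inverse q * (qint 2 q) ^ (l1 - l2 + 1) * (qint 3 q) ^ l2"
proof
  show "F [l1] q = (qint 2 q) ^ l1"
    by (simp add: F_single_row qint_2)
next
  obtain d where l1: "l1 = l2 + d"
    using assms(1) le_Suc_ex by blast
  have "F [l1, l2] q = inverse q * ((1 + q) ^ d * (q * F [l2, l2] q))"
    using assms(2) by (simp add: l1 F_two_rows_eq_square)
  also have "\<dots> = inverse q * ((1 + q) ^ d * ((1 + q) * (1 + q + q\<^sup>2) ^ l2 - (1 + q) ^ l2))"
    by (simp only: F_square_closed_form)
  also have "\<dots> = - inverse q * (qint 2 q) ^ l1
            + inverse q * (qint 2 q) ^ (l1 - l2 + 1) * (qint 3 q) ^ l2"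
    by (simp add: l1 qint_2 qint_3 algebra_simps power_add)
  finally show "F [l1, l2] q = - inverse q * (qint 2 q) ^ l1
            + inverse q * (qint 2 q) ^ (l1 - l2 + 1) * (qint 3 q) ^ l2" .
qed

end
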